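(* Let $a,b\in\mathbb{C}$ with $(a,b)\neq(1,0)$, and $\alpha,\bar\alpha,\beta,\bar\beta\in\mathbb{C}$ with $\alpha,\bar\alpha\neq0$ and $\beta\neq\bar\beta$. Consider extensions $0\to M_{\bar\alpha,\bar\beta}\to E\to M_{\alpha,\beta}\to0$ of $\mathcal{W}(a,b)$-modules, written as $E=\mathbb{C}[\partial]v_{\bar\alpha}\oplus\mathbb{C}[\partial]v_\alpha$ with $L_\lambda v_\alpha=(\partial+\alpha\lambda+\beta)v_\alpha+f(\partial,\lambda)v_{\bar\alpha}$, $W_\lambda v_\alpha=g(\partial,\lambda)v_{\bar\alpha}$. (0) If $\beta-\bar\beta+b\neq0$, every such extension is trivial. Now assume $\beta-\bar\beta+b=0$. Then every such extension is equivalent to one with $f=0$, and an extension with $f=0$ is nontrivial iff $g\neq0$. Moreover, letting $m$ denote the total degree of $g$, the nonzero $g$ that occur (with $f=0$) are exactly the nonzero scalar multiples of the following polynomials, under the stated conditions: (2) If $a\neq1$: (a) $m=0$: $\alpha-\bar\alpha=1-a$, $g=1$; (b) $m=1$: $\alpha-\bar\alpha=2-a$, $g=\partial-\frac{\bar\alpha}{1-a}\lambda+\frac{\bar\alpha b}{1-a}+\bar\beta$; (c) $m=2$: $\alpha=1$, $\bar\alpha=a-2$, $g=\partial^2-\frac{1+2\bar\alpha}{1-a}\partial\lambda-\frac{\bar\alpha}{1-a}\lambda^2+a_{10}\partial+a_{11}\lambda+a_{00}$ with $a_{10}=2\bar\beta+\frac{(1+2\bar\alpha)b}{1-a}$, $a_{11}=\frac{2b\bar\alpha}{1-a}-\frac{(1+2\bar\alpha)\bar\beta}{1-a}$,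 $a_{00}=\bar\beta^2+\frac{b\bar\beta(1+2\bar\alpha)}{1-a}-\frac{b^2\bar\alpha}{1-a}$; (d) $m=3$: $\alpha=a=\frac53$, $\bar\alpha=-\frac23$, $g=\partial^3+\frac32\partial^2\lambda-\frac32\partial\lambda^2-\lambda^3+a_{20}\partial^2+a_{21}\partial\lambda+a_{22}\lambda^2+a_{10}\partial+a_{11}\lambda+a_{00}$ with $a_{20}=3\bar\beta-\frac32b$, $a_{21}=3\bar\beta+3b$, $a_{22}=-\frac32\bar\beta+3b$, $a_{10}=3\bar\beta^2-3b\bar\beta-\frac32b^2$, $a_{11}=\frac32\bar\beta^2+3b\bar\beta-3b^2$, $a_{00}=\bar\beta^3-\frac32b\bar\beta^2-\frac32b^2\bar\beta+b^3$; and no other degrees occur. (3) If $a=1$: (a) $m=0$: $\alpha=\bar\alpha$, $g=1$; (b) $m=1$: $\alpha-\bar\alpha=1$, $g=\lambda-b$; (c) $m=2$: $\alpha-\bar\alpha=2$, $g=\partial\lambda-\bar\alpha\lambda^2-b\partial+(\bar\beta+2b\bar\alpha)\lambda-(b\bar\beta+b^2\bar\alpha)$; (d) $m=3$: $\alpha=1$, $\bar\alpha=-2$, $g=\partial^2\lambda+3\partial\lambda^2+2\lambda^3-b\partial^2+(2\bar\beta-6b)\partial\lambda+(3\bar\beta-6b)\lambda^2+(3b^2-2b\bar\beta)\partial+(\bar\beta^2-6b\bar\beta+6b^2)\lambda-\bar\beta^2b+3b^2\bar\beta-2b^3$; and no other degrees occur.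
   Context: A conformal module over a Lie conformal algebra $\mathcal{R}$ is a $\mathbb{C}[\partial]$-module $V$ with $\mathbb{C}$-linear maps $\mathcal{R}\otimes V\to V[\lambda]$, $a\otimes v\mapsto a_\lambda v$, such that $(\partial a)_\lambda v=-\lambda a_\lambda v$, $a_\lambda(\partial v)=(\partial+\lambda)a_\lambda v$, and $a_\lambda(b_\mu v)-b_\mu(a_\lambda v)=[a_\lambda b]_{\lambda+\mu}v$. The Lie conformal algebra $\mathcal{W}(a,b)$ is the free $\mathbb{C}[\partial]$-module on $L,W$ with $[L_\lambda L]=(\partial+2\lambda)L$, $[L_\lambda W]=(\partial+a\lambda+b)W$, $[W_\lambda W]=0$. For $(a,b)\neq(1,0)$ and $\alpha\neq0$, $M_{\alpha,\beta}=\mathbb{C}[\partial]v$ with $L_\lambda v=(\partial+\alpha\lambda+\beta)v$, $W_\lambda v=0$. Every extension of $M_{\alpha,\beta}$ by $M_{\bar\alpha,\bar\beta}$ can be written in the displayed form with $f,g\in\mathbb{C}[\partial,\lambda]$, where $\mathbb{C}[\partial]v_{\bar\alpha}\cong M_{\bar\alpha,\bar\beta}$ is a submodule. Equivalence of extensions means a module homomorphism between middle terms compatible with the identities on the end terms; trivial means equivalent to the direct sum extension. *)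

theory Defs
  imports "HOL-Computational_Algebra.Polynomial"
begin

text \<open>
  C[\<partial>] is represented by complex poly (variable \<partial>).
  C[\<partial>,\<lambda>] is represented by complex poly poly: the outer variable is \<lambda>,
  the coefficients are polynomials in \<partial>.
  An element r(\<partial>)L + s(\<partial>)W of W(a,b) is the pair (r,s).
  An element p(\<partial>)vbar + q(\<partial>)v of E is the pair (p,q), where vbar spans the
  submodule M_{alb,beb} and v maps to the generator of the quotient M_{al,be}.
  Elements of V[\<lambda>] (polynomials in \<lambda> with coefficients in V) are represented
  through their values at all complex numbers \<lambda> (injective since C is infinite):
  every identity in V[\<lambda>] or V[\<lambda>,\<mu>] is required for all complex \<lambda>, \<mu>.
\<close>

type_synonym cpoly = "complex poly"
type_synonym cpoly2 = "complex poly poly"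
type_synonym lca_elt = "cpoly \<times> cpoly"
type_synonym mod_elt = "cpoly \<times> cpoly"

definition shiftp :: "cpoly \<Rightarrow> complex \<Rightarrow> cpoly" where
  "shiftp p l = pcompose p [:l, 1:]"

definition eval2 :: "cpoly2 \<Rightarrow> complex \<Rightarrow> cpoly" where
  "eval2 f l = poly f [:l:]"

definition pD :: cpoly2 where "pD = [:[:0, 1:]:]"
definition pL :: cpoly2 where "pL = [:0, 1:]"
definition cc :: "complex \<Rightarrow> cpoly2" where "cc c = [:[:c:]:]"

definition eadd :: "mod_elt \<Rightarrow> mod_elt \<Rightarrow> mod_elt" where
  "eadd u w = (fst u + fst w, snd u + snd w)"
definition ediff :: "mod_elt \<Rightarrow> mod_elt \<Rightarrow> mod_elt" where
  "ediff u w = (fst u - fst w, snd u - snd w)"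
definition escale :: "cpoly \<Rightarrow> mod_elt \<Rightarrow> mod_elt" where
  "escale c u = (c * fst u, c * snd u)"

definition dR :: "lca_elt \<Rightarrow> lca_elt" where
  "dR x = ([:0, 1:] * fst x, [:0, 1:] * snd x)"

text \<open>The \<lambda>-bracket of W(a,b) at a value \<lambda> = l:
  [L_\<lambda> L] = (\<partial>+2\<lambda>)L, [L_\<lambda> W] = (\<partial>+a\<lambda>+b)W, [W_\<lambda> W] = 0, and
  [W_\<lambda> L] = -[L_{-\<lambda>-\<partial>} W] = ((a-1)\<partial>+a\<lambda>-b)W (skew-symmetry), extended by
  sesquilinearity [r(\<partial>)X_\<lambda> s(\<partial>)Y] = r(-\<lambda>) s(\<partial>+\<lambda>) [X_\<lambda> Y].\<close>
definition Wbracket :: "complex \<Rightarrow> complex \<Rightarrow> complex \<Rightarrow> lca_elt \<Rightarrow> lca_elt \<Rightarrow> lca_elt" where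
  "Wbracket a b l x y =
     (smult (poly (fst x) (-l)) (shiftp (fst y) l * [:2*l, 1:]),
      smult (poly (fst x) (-l)) (shiftp (snd y) l * [:a*l + b, 1:])
      + smult (poly (snd x) (-l)) (shiftp (fst y) l * [:a*l - b, a - 1:]))"

text \<open>The displayed action on E:
  L_\<lambda> vbar = (\<partial>+alb \<lambda>+beb) vbar, W_\<lambda> vbar = 0,
  L_\<lambda> v = (\<partial>+al \<lambda>+be) v + f(\<partial>,\<lambda>) vbar, W_\<lambda> v = g(\<partial>,\<lambda>) vbar,
  extended to E by X_\<lambda>(p(\<partial>)u) = p(\<partial>+\<lambda>) X_\<lambda> u and to W(a,b) by
  (r(\<partial>)X)_\<lambda> = r(-\<lambda>) X_\<lambda>.\<close>
definition actL :: "complex \<Rightarrow> complex \<Rightarrow> complex \<Rightarrow> complex \<Rightarrow> cpoly2 \<Rightarrow> complex \<Rightarrow> mod_elt \<Rightarrow> mod_elt" where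
  "actL al be alb beb f l u =
     (shiftp (fst u) l * [:beb + alb * l, 1:] + shiftp (snd u) l * eval2 f l,
      shiftp (snd u) l * [:be + al * l, 1:])"

definition actW :: "cpoly2 \<Rightarrow> complex \<Rightarrow> mod_elt \<Rightarrow> mod_elt" where
  "actW g l u = (shiftp (snd u) l * eval2 g l, 0)"

definition act :: "complex \<Rightarrow> complex \<Rightarrow> complex \<Rightarrow> complex \<Rightarrow> cpoly2 \<Rightarrow> cpoly2
                    \<Rightarrow> lca_elt \<Rightarrow> complex \<Rightarrow> mod_elt \<Rightarrow> mod_elt" where
  "act al be alb beb f g x l u =
     eadd (escale [:poly (fst x) (-l):] (actL al be alb beb f l u))
          (escale [:poly (snd x) (-l):] (actW g l u))"

definition is_ext_module :: "complex \<Rightarrow> complex \<Rightarrow> complex \<Rightarrow> complex \<Rightarrow> complex \<Rightarrow> complex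
                              \<Rightarrow> cpoly2 \<Rightarrow> cpoly2 \<Rightarrow> bool" where
  "is_ext_module a b al be alb beb f g \<longleftrightarrow>
     (\<forall>x l u. act al be alb beb f g (dR x) l u = escale [:-l:] (act al be alb beb f g x l u)) \<and>
     (\<forall>x l u. act al be alb beb f g x l (escale [:0, 1:] u)
               = escale [:l, 1:] (act al be alb beb f g x l u)) \<and>
     (\<forall>x y l m u. ediff (act al be alb beb f g x l (act al be alb beb f g y m u))
                        (act al be alb beb f g y m (act al be alb beb f g x l u))
                 = act al be alb beb f g (Wbracket a b l x y) (l + m) u)"

text \<open>Equivalence of the extension given by (f,g) with the one given by (f',g'):
  a homomorphism of conformal modules (C[\<partial>]-linear, commuting with all \<lambda>-actions)
  between the middle terms which is the identity on the submodule C[\<partial>]vbar and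
  induces the identity on the quotient.\<close>
definition ext_equiv :: "complex \<Rightarrow> complex \<Rightarrow> complex \<Rightarrow> complex
                         \<Rightarrow> cpoly2 \<Rightarrow> cpoly2 \<Rightarrow> cpoly2 \<Rightarrow> cpoly2 \<Rightarrow> bool" where
  "ext_equiv al be alb beb f g f' g' \<longleftrightarrow>
     (\<exists>\<phi> :: mod_elt \<Rightarrow> mod_elt.
        (\<forall>u w. \<phi> (eadd u w) = eadd (\<phi> u) (\<phi> w)) \<and>
        (\<forall>c u. \<phi> (escale c u) = escale c (\<phi> u)) \<and>
        (\<forall>p. \<phi> (p, 0) = (p, 0)) \<and>
        (\<forall>u. snd (\<phi> u) = snd u) \<and>
        (\<forall>x l u. \<phi> (act al be alb beb f g x l u) = act al be alb beb f' g' x l (\<phi> u)))"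

definition ext_trivial :: "complex \<Rightarrow> complex \<Rightarrow> complex \<Rightarrow> complex \<Rightarrow> cpoly2 \<Rightarrow> cpoly2 \<Rightarrow> bool" where
  "ext_trivial al be alb beb f g \<longleftrightarrow> ext_equiv al be alb beb f g 0 0"

definition g2b :: "complex \<Rightarrow> complex \<Rightarrow> complex \<Rightarrow> complex \<Rightarrow> cpoly2" where
  "g2b a b alb beb = pD - cc (alb / (1 - a)) * pL + cc (alb * b / (1 - a) + beb)"

definition g2c :: "complex \<Rightarrow> complex \<Rightarrow> complex \<Rightarrow> complex \<Rightarrow> cpoly2" where
  "g2c a b alb beb =
     pD ^ 2 - cc ((1 + 2 * alb) / (1 - a)) * pD * pL - cc (alb / (1 - a)) * pL ^ 2
     + cc (2 * beb + (1 + 2 * alb) * b / (1 - a)) * pD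
     + cc (2 * b * alb / (1 - a) - (1 + 2 * alb) * beb / (1 - a)) * pL
     + cc (beb ^ 2 + b * beb * (1 + 2 * alb) / (1 - a) - b ^ 2 * alb / (1 - a))"

definition g2d :: "complex \<Rightarrow> complex \<Rightarrow> cpoly2" where
  "g2d b beb =
     pD ^ 3 + cc (3/2) * pD ^ 2 * pL - cc (3/2) * pD * pL ^ 2 - pL ^ 3
     + cc (3 * beb - 3/2 * b) * pD ^ 2 + cc (3 * beb + 3 * b) * pD * pL
     + cc (-(3/2) * beb + 3 * b) * pL ^ 2
     + cc (3 * beb ^ 2 - 3 * b * beb - 3/2 * b ^ 2) * pD
     + cc (3/2 * beb ^ 2 + 3 * b * beb - 3 * b ^ 2) * pL
     + cc (beb ^ 3 - 3/2 * b * beb ^ 2 - 3/2 * b ^ 2 * beb + b ^ 3)"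

definition g3b :: "complex \<Rightarrow> cpoly2" where
  "g3b b = pL - cc b"

definition g3c :: "complex \<Rightarrow> complex \<Rightarrow> complex \<Rightarrow> cpoly2" where
  "g3c b alb beb =
     pD * pL - cc alb * pL ^ 2 - cc b * pD + cc (beb + 2 * b * alb) * pL
     - cc (b * beb + b ^ 2 * alb)"

definition g3d :: "complex \<Rightarrow> complex \<Rightarrow> cpoly2" where
  "g3d b beb =
     pD ^ 2 * pL + 3 * pD * pL ^ 2 + 2 * pL ^ 3 - cc b * pD ^ 2
     + cc (2 * beb - 6 * b) * pD * pL + cc (3 * beb - 6 * b) * pL ^ 2
     + cc (3 * b ^ 2 - 2 * b * beb) * pD + cc (beb ^ 2 - 6 * b * beb + 6 * b ^ 2) * pL
     - cc (beb ^ 2 * b - 3 * b ^ 2 * beb + 2 * b ^ 3)"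

end

theory Submission
  imports Defs
begin

text \<open>
  For \<open>be \<noteq> beb\<close> the \<open>L\<close>-part \<open>f\<close> is a coboundary and is removed by a change of basis, while
  \<open>g\<close> vanishes unless \<open>be - beb + b = 0\<close>. In that case setting \<open>\<mu> = 0\<close> in the \<open>W\<close>-condition
  expresses \<open>((a - 1) \<lambda> + b) g(\<partial>, \<lambda>)\<close> through the one-variable polynomial \<open>H = g(\<partial>, 0)\<close>;
  substituting this back and comparing top coefficients along the rays
  \<open>(\<partial>, \<lambda>, \<mu>) = (p t, q t, t)\<close> gives polynomial identities in \<open>p, q\<close> which bound \<open>deg H \<le> 3\<close> and
  determine the parameters for each degree. Conversely the parameters then determine the degree
  of \<open>H\<close>, which makes each space of solutions one-dimensional.
\<close>

lemma poly_eq_0_if_vanishes_off: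
  fixes P :: "'a::{idom, ring_char_0} poly"
  assumes "\<And>q. q \<noteq> z \<Longrightarrow> poly P q = 0"
  shows "P = 0"
proof (rule ccontr)
  assume "P \<noteq> 0"
  moreover have "UNIV - {z} \<subseteq> {q. poly P q = 0}" using assms by auto
  moreover have "infinite (UNIV - {z} :: 'a set)" by (simp add: infinite_UNIV_char_0)
  ultimately show False using poly_roots_finite finite_subset by blast
qed

lemma coeff_mult_top:
  fixes A B :: "'a::comm_semiring_1 poly"
  assumes "degree A \<le> d" "degree B \<le> e"
  shows "coeff (A * B) (d + e) = coeff A d * coeff B e"
proof -
  have "coeff (A * B) (d + e) = (\<Sum>i\<le>d+e. coeff A i * coeff B (d + e - i))"
    by (rule coeff_mult)
  also have "\<dots> = (\<Sum>i\<le>d+e. if i = d then coeff A d * coeff B e else 0)"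
  proof (rule sum.cong)
    fix i assume "i \<in> {..d+e}"
    show "coeff A i * coeff B (d + e - i) = (if i = d then coeff A d * coeff B e else 0)"
    proof (cases "i = d")
      case False
      then have "d < i \<or> e < d + e - i" by auto
      then show ?thesis using assms False by (auto simp: coeff_eq_0)
    qed simp
  qed simp
  finally show ?thesis by simp
qed

lemma coeff_linear_mult3_top:
  fixes D :: "'a::comm_semiring_1 poly"
  assumes "degree D \<le> n"
  shows "coeff ([:a0, a1:] * [:b0, b1:] * D) (2 + n) = a1 * b1 * coeff D n"
proof -
  have deg: "degree ([:a0, a1:] * [:b0, b1:]) \<le> 2"
    using degree_mult_le[of "[:a0, a1:]" "[:b0, b1:]"] by simp
  show ?thesis unfolding coeff_mult_top[OF deg assms] by (simp add: numeral_2_eq_2 mult_ac)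
qed

lemma coeff_linear_mult4_top:
  fixes D :: "'a::comm_semiring_1 poly"
  assumes "degree D \<le> n"
  shows "coeff ([:a0, a1:] * [:b0, b1:] * [:c0, c1:] * D) (3 + n) = a1 * b1 * c1 * coeff D n"
proof -
  have deg: "degree ([:a0, a1:] * [:b0, b1:] * [:c0, c1:]) \<le> 3"
    using degree_mult_le[of "[:a0, a1:] * [:b0, b1:]" "[:c0, c1:]"] degree_mult_le[of "[:a0, a1:]" "[:b0, b1:]"]
    by simp
  show ?thesis unfolding coeff_mult_top[OF deg assms] by (simp add: numeral_3_eq_3 numeral_2_eq_2 mult_ac)
qed

lemma poly_pcompose_scale: "poly (p \<circ>\<^sub>p [:0, c:]) t = poly p (c * t)"
  by (simp add: poly_pcompose algebra_simps)

lemma degree_pcompose_scale_le: "degree (p \<circ>\<^sub>p [:0, c:]) \<le> degree p"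
  using degree_pcompose_le[of p "[:0, c:]"] by (cases "c = 0") auto

lemma two_times_choose_2: "2 * (of_nat (n choose 2) :: 'a::{idom, ring_char_0}) = of_nat n * (of_nat n - 1)"
proof (induction n)
  case (Suc n)
  have "Suc n choose 2 = n + (n choose 2)" by (simp add: numeral_2_eq_2)
  then show ?case using Suc by (simp add: algebra_simps)
qed (simp add: numeral_2_eq_2)

lemma six_times_choose_3:
  "6 * (of_nat (n choose 3) :: 'a::{idom, ring_char_0}) = of_nat n * (of_nat n - 1) * (of_nat n - 2)"
proof (induction n)
  case (Suc n)
  have "Suc n choose 3 = (n choose 2) + (n choose 3)" by (simp add: numeral_3_eq_3 numeral_2_eq_2)
  then have "(of_nat (Suc n choose 3) :: 'a) = of_nat (n choose 2) + of_nat (n choose 3)" by simp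
  then show ?case
    unfolding of_nat_Suc using Suc.IH two_times_choose_2[of n, where 'a = 'a] by algebra
qed simp

lemma eq_3_if_binomial_relations:
  fixes u :: "'a::{idom, ring_char_0}"
  assumes "u * of_nat n + 1 + of_nat (n choose 2) = 0"
    and "u * of_nat (n choose 2) + of_nat n + of_nat (n choose 3) = 0"
  shows "n = 3"
proof -
  let ?N = "of_nat n :: 'a"
  have "2 * (u * ?N) = - 2 - ?N * (?N - 1)"
    using assms(1) two_times_choose_2[of n, where 'a = 'a] by algebra
  then have "(?N - 3) * (?N + 1) * (?N + 2) = 0"
    using assms(2) two_times_choose_2[of n, where 'a = 'a] six_times_choose_3[of n, where 'a = 'a]
    by algebra
  moreover have "?N + 1 \<noteq> 0" "?N + 2 \<noteq> 0"
    using of_nat_eq_0_iff[of "n + 1", where 'a = 'a] of_nat_eq_0_iff[of "n + 2", where 'a = 'a]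
    by (simp_all add: add.commute)
  ultimately have "?N = of_nat 3" by simp
  then show ?thesis using of_nat_eq_iff by blast
qed

definition poly2 :: "cpoly2 \<Rightarrow> complex \<Rightarrow> complex \<Rightarrow> complex" where
  "poly2 g l x = poly (eval2 g l) x"

lemma poly_shiftp [simp]: "poly (shiftp p l) x = poly p (x + l)"
  by (simp add: shiftp_def poly_pcompose algebra_simps)

lemma eval2_simps [simp]:
  "eval2 (p + q) l = eval2 p l + eval2 q l"
  "eval2 (p - q) l = eval2 p l - eval2 q l"
  "eval2 (p * q) l = eval2 p l * eval2 q l"
  "eval2 (- p) l = - eval2 p l"
  "eval2 (p ^ n) l = eval2 p l ^ n"
  "eval2 0 l = 0"
  "eval2 1 l = 1"
  "eval2 (numeral k) l = numeral k"
  "eval2 (cc c) l = [:c:]"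
  "eval2 pD l = [:0, 1:]"
  "eval2 pL l = [:l:]"
  by (simp_all add: eval2_def poly_power cc_def pD_def pL_def)

lemma poly2_simps [simp]:
  "poly2 (p + q) l x = poly2 p l x + poly2 q l x"
  "poly2 (p - q) l x = poly2 p l x - poly2 q l x"
  "poly2 (p * q) l x = poly2 p l x * poly2 q l x"
  "poly2 (p ^ n) l x = poly2 p l x ^ n"
  "poly2 0 l x = 0"
  "poly2 (numeral k) l x = numeral k"
  "poly2 (cc c) l x = c"
  "poly2 pD l x = x"
  "poly2 pL l x = l"
  by (simp_all add: poly2_def poly_power)

lemma poly2_as_poly: "poly2 g l x = poly (map_poly (\<lambda>p. poly p x) g) l"
  unfolding poly2_def eval2_def by (induction g) (simp_all add: map_poly_pCons)

lemma cpoly2_eq_0_if_vanishes_off: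
  assumes "\<And>l x. l \<noteq> z \<Longrightarrow> poly2 g l x = 0"
  shows "g = 0"
proof -
  have "map_poly (\<lambda>p. poly p x) g = 0" for x
    by (rule poly_eq_0_if_vanishes_off[where z = z]) (use assms in \<open>simp add: poly2_as_poly\<close>)
  then have "poly (coeff g j) x = 0" for j x
    by (metis coeff_0 coeff_map_poly poly_0)
  then have "coeff g j = 0" for j
    by (simp add: poly_all_0_iff_0[symmetric])
  then show "g = 0"
    by (simp add: poly_eq_iff)
qed

lemma cpoly2_eq_0_if_vanishes: "(\<And>l x. poly2 g l x = 0) \<Longrightarrow> g = 0"
  using cpoly2_eq_0_if_vanishes_off by blast

lemma cc_mult_cc [simp]: "cc c * cc d = cc (c * d)"
  by (simp add: cc_def)

lemma cc_eq_0_iff [simp]: "cc c = 0 \<longleftrightarrow> c = 0"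
  by (simp add: cc_def)

lemma mod_elt_simps [simp]:
  "fst (eadd u w) = fst u + fst w" "snd (eadd u w) = snd u + snd w"
  "fst (ediff u w) = fst u - fst w" "snd (ediff u w) = snd u - snd w"
  "fst (escale c u) = c * fst u" "snd (escale c u) = c * snd u"
  "fst (dR x) = [:0, 1:] * fst x" "snd (dR x) = [:0, 1:] * snd x"
  by (simp_all add: eadd_def ediff_def escale_def dR_def)

lemma poly_act [simp]:
  "poly (fst (act al be alb beb f g x l u)) y =
     poly (fst x) (-l) * (poly (fst u) (y + l) * (y + alb * l + beb) + poly (snd u) (y + l) * poly2 f l y)
     + poly (snd x) (-l) * (poly (snd u) (y + l) * poly2 g l y)"
  "poly (snd (act al be alb beb f g x l u)) y =
     poly (fst x) (-l) * (poly (snd u) (y + l) * (y + al * l + be))"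
  by (simp_all add: act_def eadd_def escale_def actL_def actW_def poly2_def algebra_simps)

lemma poly_Wbracket [simp]:
  "poly (fst (Wbracket a b l x y)) z = poly (fst x) (-l) * poly (fst y) (z + l) * (z + 2*l)"
  "poly (snd (Wbracket a b l x y)) z =
     poly (fst x) (-l) * poly (snd y) (z + l) * (z + a * l + b)
     + poly (snd x) (-l) * poly (fst y) (z + l) * ((a - 1) * z + a * l - b)"
  by (simp_all add: Wbracket_def algebra_simps)

lemma mod_elt_eq_iff:
  "(u::mod_elt) = w \<longleftrightarrow> (\<forall>y. poly (fst u) y = poly (fst w) y) \<and> (\<forall>y. poly (snd u) y = poly (snd w) y)"
  by (simp add: prod_eq_iff poly_eq_poly_eq_iff[symmetric] fun_eq_iff)

section \<open>The cocycle conditions\<close>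

text \<open>The \<open>vbar\<close>-components of the commutator identity for the pairs \<open>(L, L)\<close> and \<open>(L, W)\<close>
  acting on \<open>v\<close>; all other instances of the module axioms hold automatically.\<close>

definition L_cocycle :: "complex \<Rightarrow> complex \<Rightarrow> complex \<Rightarrow> complex \<Rightarrow> cpoly2 \<Rightarrow> bool" where
  "L_cocycle al be alb beb f \<longleftrightarrow>
     (\<forall>x l m. (x + l + al*m + be) * poly2 f l x + (x + alb*l + beb) * poly2 f m (x + l)
              - (x + m + al*l + be) * poly2 f m x - (x + alb*m + beb) * poly2 f l (x + m)
            = (l - m) * poly2 f (l + m) x)"

definition W_cocycle :: "complex \<Rightarrow> complex \<Rightarrow> complex \<Rightarrow> complex \<Rightarrow> complex \<Rightarrow> complex
                          \<Rightarrow> cpoly2 \<Rightarrow> bool" where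
  "W_cocycle a b al be alb beb g \<longleftrightarrow>
     (\<forall>x l m. (x + alb*l + beb) * poly2 g m (x + l) - (x + m + al*l + be) * poly2 g m x
            = ((a - 1)*l - m + b) * poly2 g (l + m) x)"

lemma L_cocycleD:
  "L_cocycle al be alb beb f \<Longrightarrow>
     (x + l + al*m + be) * poly2 f l x + (x + alb*l + beb) * poly2 f m (x + l)
       - (x + m + al*l + be) * poly2 f m x - (x + alb*m + beb) * poly2 f l (x + m)
     = (l - m) * poly2 f (l + m) x"
  by (simp add: L_cocycle_def)

lemma W_cocycleD:
  "W_cocycle a b al be alb beb g \<Longrightarrow>
     (x + alb*l + beb) * poly2 g m (x + l) - (x + m + al*l + be) * poly2 g m x
     = ((a - 1)*l - m + b) * poly2 g (l + m) x"
  by (simp add: W_cocycle_def)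

lemma cocycles_if_is_ext_module:
  assumes "is_ext_module a b al be alb beb f g"
  shows "L_cocycle al be alb beb f" and "W_cocycle a b al be alb beb g"
proof -
  let ?act = "act al be alb beb f g"
  have jacobi: "ediff (?act x l (?act y m (0, 1))) (?act y m (?act x l (0, 1)))
                  = ?act (Wbracket a b l x y) (l + m) (0, 1)" for x y l m
    using assms unfolding is_ext_module_def by blast
  show "L_cocycle al be alb beb f"
    unfolding L_cocycle_def
  proof (intro allI)
    fix x l m
    show "(x + l + al*m + be) * poly2 f l x + (x + alb*l + beb) * poly2 f m (x + l)
            - (x + m + al*l + be) * poly2 f m x - (x + alb*m + beb) * poly2 f l (x + m)
          = (l - m) * poly2 f (l + m) x"
      using jacobi[of "(1, 0)" l "(1, 0)" m] unfolding mod_elt_eq_iff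
      by (auto dest!: spec[of _ x] simp: algebra_simps)
  qed
  show "W_cocycle a b al be alb beb g"
    unfolding W_cocycle_def
  proof (intro allI)
    fix x l m
    show "(x + alb*l + beb) * poly2 g m (x + l) - (x + m + al*l + be) * poly2 g m x
          = ((a - 1)*l - m + b) * poly2 g (l + m) x"
      using jacobi[of "(1, 0)" l "(0, 1)" m] unfolding mod_elt_eq_iff
      by (auto dest!: spec[of _ x] simp: algebra_simps)
  qed
qed

lemma is_ext_module_if_cocycles:
  assumes L: "L_cocycle al be alb beb f" and W: "W_cocycle a b al be alb beb g"
  shows "is_ext_module a b al be alb beb f g"
  unfolding is_ext_module_def
proof (intro conjI allI)
  fix x l u
  show "act al be alb beb f g (dR x) l u = escale [:- l:] (act al be alb beb f g x l u)"
    by (simp add: mod_elt_eq_iff algebra_simps)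
  show "act al be alb beb f g x l (escale [:0, 1:] u) = escale [:l, 1:] (act al be alb beb f g x l u)"
    by (simp add: mod_elt_eq_iff algebra_simps)
next
  fix x y l m u
  show "ediff (act al be alb beb f g x l (act al be alb beb f g y m u))
              (act al be alb beb f g y m (act al be alb beb f g x l u))
        = act al be alb beb f g (Wbracket a b l x y) (l + m) u"
    unfolding mod_elt_eq_iff
  proof (intro conjI allI)
    fix z
    show "poly (fst (ediff (act al be alb beb f g x l (act al be alb beb f g y m u))
                        (act al be alb beb f g y m (act al be alb beb f g x l u)))) z
        = poly (fst (act al be alb beb f g (Wbracket a b l x y) (l + m) u)) z"
      using L_cocycleD[OF L, of z l m] W_cocycleD[OF W, of z l m] W_cocycleD[OF W, of z m l]
      by (simp add: add.commute[of m l] add.left_commute[of m l] add.assoc) algebra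
  qed (simp add: algebra_simps)
qed

lemma is_ext_module_iff_cocycles:
  "is_ext_module a b al be alb beb f g \<longleftrightarrow> L_cocycle al be alb beb f \<and> W_cocycle a b al be alb beb g"
  by (meson cocycles_if_is_ext_module is_ext_module_if_cocycles)

lemma L_cocycle_0: "L_cocycle al be alb beb 0"
  by (simp add: L_cocycle_def)

lemma is_ext_module_0_iff: "is_ext_module a b al be alb beb 0 g \<longleftrightarrow> W_cocycle a b al be alb beb g"
  by (simp add: is_ext_module_iff_cocycles L_cocycle_0)

lemma W_cocycle_scale:
  assumes "W_cocycle a b al be alb beb g"
  shows "W_cocycle a b al be alb beb (cc c * g)"
  unfolding W_cocycle_def
proof (intro allI)
  fix x l m
  show "(x + alb*l + beb) * poly2 (cc c * g) m (x + l) - (x + m + al*l + be) * poly2 (cc c * g) m x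
          = ((a - 1)*l - m + b) * poly2 (cc c * g) (l + m) x"
    using W_cocycleD[OF assms, of x l m] by simp algebra
qed

lemma W_cocycle_diff:
  assumes "W_cocycle a b al be alb beb g1" and "W_cocycle a b al be alb beb g2"
  shows "W_cocycle a b al be alb beb (g1 - g2)"
  unfolding W_cocycle_def
proof (intro allI)
  fix x l m
  show "(x + alb*l + beb) * poly2 (g1 - g2) m (x + l) - (x + m + al*l + be) * poly2 (g1 - g2) m x
          = ((a - 1)*l - m + b) * poly2 (g1 - g2) (l + m) x"
    using W_cocycleD[OF assms(1), of x l m] W_cocycleD[OF assms(2), of x l m] by simp algebra
qed

section \<open>Equivalence and triviality\<close>

lemma ext_equiv_refl: "ext_equiv al be alb beb f g f g"
  unfolding ext_equiv_def by (rule exI[of _ id]) simp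

text \<open>For \<open>be \<noteq> beb\<close> every \<open>L\<close>-cocycle is the coboundary of \<open>p0 = f(\<partial>, 0) / (beb - be)\<close>,
  and the change of basis \<open>v \<mapsto> v + p0(\<partial>) vbar\<close> removes it.\<close>

lemma ext_equiv_drop_f:
  assumes L: "L_cocycle al be alb beb f" and bene: "be \<noteq> beb"
  shows "ext_equiv al be alb beb f g 0 g"
proof -
  define p0 where "p0 = smult (1 / (beb - be)) (eval2 f 0)"
  have nz: "beb - be \<noteq> 0" using bene by simp
  have p0_val: "(beb - be) * poly p0 z = poly2 f 0 z" for z
    using nz by (simp add: p0_def poly2_def)
  have coboundary: "poly2 f l x = (x + alb*l + beb) * poly p0 (x + l) - (x + al*l + be) * poly p0 x"
    for l x
  proof -
    have "(beb - be) * poly2 f l x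
             = (beb - be) * ((x + alb*l + beb) * poly p0 (x + l) - (x + al*l + be) * poly p0 x)"
      using L_cocycleD[OF L, of x l 0] unfolding p0_val[symmetric] by (simp add: algebra_simps)
    then show ?thesis using nz by simp
  qed
  define \<phi> where "\<phi> = (\<lambda>u::mod_elt. (fst u + snd u * p0, snd u))"
  show ?thesis unfolding ext_equiv_def
  proof (rule exI[of _ \<phi>], intro conjI allI)
    fix x l u
    show "\<phi> (act al be alb beb f g x l u) = act al be alb beb 0 g x l (\<phi> u)"
      unfolding mod_elt_eq_iff by (simp add: \<phi>_def coboundary algebra_simps)
  qed (simp_all add: \<phi>_def eadd_def escale_def algebra_simps)
qed

lemma ext_trivial_0_iff: "ext_trivial al be alb beb 0 g \<longleftrightarrow> g = 0"
proof
  assume "ext_trivial al be alb beb 0 g"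
  then obtain \<phi> where id_sub: "\<forall>p. \<phi> (p, 0) = (p, 0)"
    and hom: "\<forall>x l u. \<phi> (act al be alb beb 0 g x l u) = act al be alb beb 0 0 x l (\<phi> u)"
    unfolding ext_trivial_def ext_equiv_def by blast
  have "act al be alb beb 0 g (0, 1) l (0, 1) = (eval2 g l, 0)" for l
    by (simp add: mod_elt_eq_iff poly2_def)
  then have "(eval2 g l, 0) = act al be alb beb 0 0 (0, 1) l (\<phi> (0, 1))" for l
    using hom id_sub by metis
  then have "poly2 g l x = 0" for l x
    unfolding mod_elt_eq_iff by (simp add: poly2_def)
  then show "g = 0" by (rule cpoly2_eq_0_if_vanishes)
qed (simp add: ext_trivial_def ext_equiv_refl)

lemma ext_trivial_if_nonresonant:
  assumes "is_ext_module a b al be alb beb f g" and "be - beb + b \<noteq> 0" and "be \<noteq> beb"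
  shows "ext_trivial al be alb beb f g"
proof -
  have L: "L_cocycle al be alb beb f" and W: "W_cocycle a b al be alb beb g"
    using assms(1) by (simp_all add: is_ext_module_iff_cocycles)
  have "(be - beb + b) * poly2 g m x = 0" for m x
    using W_cocycleD[OF W, of x 0 m] by (simp add: algebra_simps)
  then have "poly2 g m x = 0" for m x using assms(2) by simp
  then have "g = 0" by (rule cpoly2_eq_0_if_vanishes)
  then show ?thesis
    unfolding ext_trivial_def using ext_equiv_drop_f[OF L assms(3)] by simp
qed

section \<open>Reduction to one variable and the leading form\<close>

definition wcoef :: "complex \<Rightarrow> complex \<Rightarrow> complex \<Rightarrow> complex" where
  "wcoef a b l = (a - 1) * l + b"

definition twisted_diff :: "complex \<Rightarrow> complex \<Rightarrow> complex \<Rightarrow> complex \<Rightarrow> (complex \<Rightarrow> complex)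
                             \<Rightarrow> complex \<Rightarrow> complex \<Rightarrow> complex" where
  "twisted_diff al be alb beb H x l = (x + alb*l + beb) * H (x + l) - (x + al*l + be) * H x"

lemma W_cocycle_wcoef_mult:
  assumes "W_cocycle a b al be alb beb g"
  shows "wcoef a b l * poly2 g l x = twisted_diff al be alb beb (poly (eval2 g 0)) x l"
  using W_cocycleD[OF assms, of x l 0] by (simp add: wcoef_def twisted_diff_def poly2_def)

lemma cpoly2_eq_0_if_wcoef_mult_eq_0:
  assumes "(a, b) \<noteq> (1, 0)" and "\<And>l x. wcoef a b l * poly2 g l x = 0"
  shows "g = 0"
proof (cases "a = 1")
  case True
  then show ?thesis using assms by (intro cpoly2_eq_0_if_vanishes) (simp add: wcoef_def)
next
  case False
  show ?thesis
  proof (rule cpoly2_eq_0_if_vanishes_off[where z = "- b / (a - 1)"])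
    fix l x assume "l \<noteq> - b / (a - 1)"
    then have "wcoef a b l \<noteq> 0" using False by (auto simp: wcoef_def field_simps)
    then show "poly2 g l x = 0" using assms(2)[of l x] by simp
  qed
qed

lemma eval2_0_neq_0_if_W_cocycle:
  assumes "W_cocycle a b al be alb beb g" and "(a, b) \<noteq> (1, 0)" and "g \<noteq> 0"
  shows "eval2 g 0 \<noteq> 0"
proof
  assume "eval2 g 0 = 0"
  then have "wcoef a b l * poly2 g l x = 0" for l x
    using W_cocycle_wcoef_mult[OF assms(1)] by (simp add: twisted_diff_def)
  then show False using cpoly2_eq_0_if_wcoef_mult_eq_0[OF assms(2)] assms(3) by blast
qed

text \<open>The \<open>W\<close>-cocycle identity multiplied by \<open>wcoef (l + m) * wcoef m\<close>, with every value of \<open>g\<close>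
  replaced via \<open>W_cocycle_wcoef_mult\<close> by the polynomial \<open>H = g(\<partial>, 0)\<close> of one variable; for
  \<open>a = 1\<close> the constant factor \<open>wcoef = b\<close> is cancelled.\<close>

definition W_residual :: "complex \<Rightarrow> complex \<Rightarrow> complex \<Rightarrow> complex \<Rightarrow> complex \<Rightarrow> complex
                           \<Rightarrow> (complex \<Rightarrow> complex) \<Rightarrow> complex \<Rightarrow> complex \<Rightarrow> complex \<Rightarrow> complex" where
  "W_residual a b al be alb beb H x l m =
     wcoef a b (l + m) * ((x + alb*l + beb) * twisted_diff al be alb beb H (x + l) m
                          - (x + m + al*l + be) * twisted_diff al be alb beb H x m)
     - wcoef a b m * ((a - 1)*l - m + b) * twisted_diff al be alb beb H x (l + m)"

definition W_residual_a1 :: "complex \<Rightarrow> complex \<Rightarrow> complex \<Rightarrow> complex \<Rightarrow> complex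
                              \<Rightarrow> (complex \<Rightarrow> complex) \<Rightarrow> complex \<Rightarrow> complex \<Rightarrow> complex \<Rightarrow> complex" where
  "W_residual_a1 b al be alb beb H x l m =
     (x + alb*l + beb) * twisted_diff al be alb beb H (x + l) m
     - (x + m + al*l + be) * twisted_diff al be alb beb H x m
     - (b - m) * twisted_diff al be alb beb H x (l + m)"

lemma W_residual_eq_0:
  assumes "W_cocycle a b al be alb beb g"
  shows "W_residual a b al be alb beb (poly (eval2 g 0)) x l m = 0"
  unfolding W_residual_def
  using W_cocycleD[OF assms, of x l m] W_cocycle_wcoef_mult[OF assms, of m "x + l"]
    W_cocycle_wcoef_mult[OF assms, of m x] W_cocycle_wcoef_mult[OF assms, of "l + m" x]
  by algebra

lemma W_residual_a1_eq_0:
  assumes "W_cocycle 1 b al be alb beb g" and "b \<noteq> 0"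
  shows "W_residual_a1 b al be alb beb (poly (eval2 g 0)) x l m = 0"
proof -
  have "b * W_residual_a1 b al be alb beb (poly (eval2 g 0)) x l m = 0"
    unfolding W_residual_a1_def
    using W_cocycleD[OF assms(1), of x l m] W_cocycle_wcoef_mult[OF assms(1), of m "x + l"]
      W_cocycle_wcoef_mult[OF assms(1), of m x] W_cocycle_wcoef_mult[OF assms(1), of "l + m" x]
    unfolding wcoef_def by algebra
  then show ?thesis using assms(2) by simp
qed

text \<open>Along the ray \<open>(x, l, m) = (p t, q t, t)\<close> the residual is a polynomial in \<open>t\<close> of degree
  \<open>\<le> deg H + 3\<close> (\<open>\<le> deg H + 2\<close> for \<open>a = 1\<close>) whose top coefficient is \<open>lead_coeff H\<close> times the
  following form in \<open>p, q\<close>: the parameter \<open>c\<close> is \<open>a\<close> if \<open>a \<noteq> 1\<close>, and \<open>0\<close> if \<open>a = 1\<close>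
  (up to the factor \<open>q + 1\<close>).\<close>

definition leading_form :: "complex \<Rightarrow> complex \<Rightarrow> complex \<Rightarrow> nat \<Rightarrow> complex \<Rightarrow> complex \<Rightarrow> complex" where
  "leading_form c al alb n p q =
     (q + 1) * ((p + alb*q) * (p + q + alb) * (p + q + 1)^n - (p + alb*q) * (p + q + al) * (p + q)^n
                - (p + 1 + al*q) * (p + alb) * (p + 1)^n + (p + 1 + al*q) * (p + al) * p^n)
     - ((c - 1)*q - 1) * ((p + alb*(q + 1)) * (p + q + 1)^n - (p + al*(q + 1)) * p^n)"

lemma leading_form_eq_0:
  fixes h :: "complex poly"
  assumes res: "\<And>x l m. W_residual a b al be alb beb (poly h) x l m = 0"
    and "a \<noteq> 1" and "h \<noteq> 0"
  shows "leading_form a al alb (degree h) p q = 0"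
proof -
  define n where "n = degree h"
  define S where "S c = h \<circ>\<^sub>p [:0, c:]" for c
  define P where "P =
     [:b,(a-1)*(q+1):] * [:beb, p+alb*q:] * [:beb, p+q+alb:] * S (p+q+1)
   - [:b,(a-1)*(q+1):] * [:beb, p+alb*q:] * [:be, p+q+al:] * S (p+q)
   - [:b,(a-1)*(q+1):] * [:be, p+1+al*q:] * [:beb, p+alb:] * S (p+1)
   + [:b,(a-1)*(q+1):] * [:be, p+1+al*q:] * [:be, p+al:] * S p
   - [:b,a-1:] * [:b,(a-1)*q-1:] * [:beb, p+alb*(q+1):] * S (p+q+1)
   + [:b,a-1:] * [:b,(a-1)*q-1:] * [:be, p+al*(q+1):] * S p"
  have "poly P t = W_residual a b al be alb beb (poly h) (p*t) (q*t) t" for t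
  proof -
    have ray: "p*t + q*t + t = (p+q+1)*t" "p*t + q*t = (p+q)*t" "p*t + t = (p+1)*t"
      "p*t + (q*t + t) = (p+q+1)*t" "(p+q)*t + t = (p+q+1)*t"
      by (simp_all add: algebra_simps)
    show ?thesis unfolding P_def S_def W_residual_def twisted_diff_def wcoef_def
      by (simp add: poly_pcompose_scale ray add.assoc[symmetric]) algebra
  qed
  then have "P = 0" using res by (simp add: poly_all_0_iff_0[symmetric])
  have dS: "degree (S c) \<le> n" for c unfolding S_def n_def by (rule degree_pcompose_scale_le)
  have cS: "coeff (S c) n = c ^ n * lead_coeff h" for c
    unfolding S_def n_def by (rule coeff_pcompose_linear)
  have "0 = coeff P (3 + n)" using \<open>P = 0\<close> by simp
  also have "\<dots> = lead_coeff h * (a - 1) * leading_form a al alb n p q"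
    unfolding P_def coeff_add coeff_diff coeff_linear_mult4_top[OF dS]
    by (simp add: cS leading_form_def algebra_simps)
  finally show ?thesis using assms(2,3) by (simp add: n_def)
qed

lemma leading_form_eq_0_a1:
  fixes h :: "complex poly"
  assumes res: "\<And>x l m. W_residual_a1 b al be alb beb (poly h) x l m = 0" and "h \<noteq> 0"
  shows "leading_form 0 al alb (degree h) p q = 0"
proof -
  define n where "n = degree h"
  define S where "S c = h \<circ>\<^sub>p [:0, c:]" for c
  define P where "P =
     [:beb, p+alb*q:] * [:beb, p+q+alb:] * S (p+q+1)
   - [:beb, p+alb*q:] * [:be, p+q+al:] * S (p+q)
   - [:be, p+1+al*q:] * [:beb, p+alb:] * S (p+1)
   + [:be, p+1+al*q:] * [:be, p+al:] * S p
   - [:b,-1:] * [:beb, p+alb*(q+1):] * S (p+q+1)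
   + [:b,-1:] * [:be, p+al*(q+1):] * S p"
  have "poly P t = W_residual_a1 b al be alb beb (poly h) (p*t) (q*t) t" for t
  proof -
    have ray: "p*t + q*t + t = (p+q+1)*t" "p*t + q*t = (p+q)*t" "p*t + t = (p+1)*t"
      "p*t + (q*t + t) = (p+q+1)*t" "(p+q)*t + t = (p+q+1)*t"
      by (simp_all add: algebra_simps)
    show ?thesis unfolding P_def S_def W_residual_a1_def twisted_diff_def
      by (simp add: poly_pcompose_scale ray add.assoc[symmetric]) algebra
  qed
  then have "P = 0" using res by (simp add: poly_all_0_iff_0[symmetric])
  have dS: "degree (S c) \<le> n" for c unfolding S_def n_def by (rule degree_pcompose_scale_le)
  have cS: "coeff (S c) n = c ^ n * lead_coeff h" for c
    unfolding S_def n_def by (rule coeff_pcompose_linear)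
  have "0 = (q + 1) * coeff P (2 + n)" using \<open>P = 0\<close> by simp
  also have "\<dots> = lead_coeff h * leading_form 0 al alb n p q"
    unfolding P_def coeff_add coeff_diff coeff_linear_mult3_top[OF dS]
    by (simp add: cS leading_form_def algebra_simps)
  finally show ?thesis using assms(2) by (simp add: n_def)
qed

section \<open>The degree of H\<close>

text \<open>On the line \<open>p = 0\<close> the form is \<open>alb (q + 1)\<close> times a polynomial in \<open>q\<close> whose
  coefficients of \<open>q\<close>, \<open>q\<^sup>2\<close>, \<open>q\<^sup>3\<close> are the three expressions below.\<close>

lemma leading_form_slice_equations:
  fixes c al alb :: complex
  assumes T: "\<And>q. leading_form c al alb n 0 q = 0" and alb0: "alb \<noteq> 0" and n1: "n \<ge> 1"
  shows "alb - al + of_nat n - c + 1 = 0"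
    and "n \<ge> 2 \<Longrightarrow> alb * of_nat n + 1 + of_nat (n choose 2) - (c - 1) * of_nat n = 0"
    and "n \<ge> 3 \<Longrightarrow> alb * of_nat (n choose 2) + of_nat n + of_nat (n choose 3)
                     - (c - 1) * of_nat (n choose 2) = 0"
proof -
  define P :: "complex poly" where "P = [:1, 1:] ^ n"
  define SP where "SP = [:0, 1:] * ([:alb, 1:] * P) - monom 1 (n + 1) * [:al, 1:] - [:1, al:]
                        - [:-1, c - 1:] * P"
  have "leading_form c al alb n 0 q = alb * (q + 1) * poly SP q" for q
    unfolding leading_form_def SP_def P_def using n1
    by (simp add: poly_power poly_monom power_0_left algebra_simps)
  then have "SP = 0"
    using T alb0 by (intro poly_eq_0_if_vanishes_off[where z = "-1"]) (auto simp: add_eq_0_iff2)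
  then have c: "coeff SP j = 0" for j by simp
  have cs: "coeff SP (Suc j) = alb * coeff P j + (if j = 0 then 0 else coeff P (j - 1))
        - (if j = 0 then al else 0) + coeff P (Suc j) - (c - 1) * coeff P j" if "j < n" for j
    unfolding SP_def using that by (cases j) (simp_all add: coeff_monom_mult algebra_simps)
  have P: "coeff P i = of_nat (n choose i)" if "i \<le> n" for i
    unfolding P_def using that by (simp add: coeff_linear_poly_power)
  show "alb - al + of_nat n - c + 1 = 0"
    using c[of 1] cs[of 0] P[of 0] P[of 1] n1 by (simp add: algebra_simps)
  show "alb * of_nat n + 1 + of_nat (n choose 2) - (c - 1) * of_nat n = 0" if "n \<ge> 2"
    using c[of 2] cs[of 1] P[of 0] P[of 1] P[of 2] that by (simp add: numeral_2_eq_2 algebra_simps)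
  show "alb * of_nat (n choose 2) + of_nat n + of_nat (n choose 3) - (c - 1) * of_nat (n choose 2) = 0"
    if "n \<ge> 3"
    using c[of 3] cs[of 2] P[of 1] P[of 2] P[of 3] that
    by (simp add: numeral_2_eq_2 numeral_3_eq_3 algebra_simps)
qed

lemma leading_form_degree_cases:
  fixes c al alb :: complex
  assumes T: "\<And>p q. leading_form c al alb n p q = 0" and alb0: "alb \<noteq> 0"
  shows "(n = 0 \<and> (al = alb \<or> al - alb = 1 - c))
       \<or> (n = 1 \<and> al - alb = 2 - c)
       \<or> (n = 2 \<and> al = 1 \<and> alb = c - 2)
       \<or> (n = 3 \<and> al = 5/3 \<and> c = 5/3 \<and> alb = -(2/3))"
proof (cases "n = 0")
  case True
  have "2 * (alb - al) * (alb - al - c + 1) = 0"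
    using T[of 0 1] True by (simp add: leading_form_def algebra_simps)
  then have "alb - al = 0 \<or> alb - al - c + 1 = 0" by simp
  then show ?thesis using True by (auto simp: algebra_simps)
next
  case False
  then have n1: "n \<ge> 1" by simp
  note slice = leading_form_slice_equations[OF T alb0 n1]
  consider "n = 1" | "n = 2" | "n \<ge> 3" using n1 by linarith
  then show ?thesis
  proof cases
    case 1
    then show ?thesis using slice(1) by (simp add: algebra_simps)
  next
    case 2
    then have "2 * (alb - (c - 2)) = 0" using slice(2) by (simp add: algebra_simps)
    then have "alb - (c - 2) = 0" by (simp only: mult_eq_0_iff) simp
    then have "alb = c - 2" by simp
    moreover then have "al = 1" using slice(1) 2 by (simp add: algebra_simps)
    ultimately show ?thesis using 2 by simp
  next
    case 3
    have "n = 3"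
      by (rule eq_3_if_binomial_relations[where u = "alb - (c - 1)"])
        (use slice(2,3) 3 in \<open>simp_all add: algebra_simps\<close>)
    then have "3 * (alb - (c - 7/3)) = 0" using slice(2) by (simp add: choose_two algebra_simps)
    then have alb: "alb = c - 7/3" by (simp only: mult_eq_0_iff) simp
    have "3 * (al - 5/3) = 0" using slice(1) \<open>n = 3\<close> unfolding alb by (simp add: algebra_simps)
    then have al: "al = 5/3" by (simp only: mult_eq_0_iff) simp
    have c: "c = 5/3"
      using T[of 1 1] \<open>n = 3\<close> unfolding alb al
      by (simp add: leading_form_def algebra_simps field_simps)
    show ?thesis using \<open>n = 3\<close> unfolding alb al c by simp
  qed
qed

lemma W_cocycle_eq_0_if_const_H:
  assumes W: "W_cocycle a b al be alb beb g" and "a \<noteq> 1" and "al = alb" and "be = beb - b"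
    and "degree (eval2 g 0) = 0"
  shows "g = 0"
proof -
  obtain c0 where h: "eval2 g 0 = [:c0:]"
    using assms(5) by (metis degree_eq_zeroE)
  have K: "wcoef a b l * poly2 g l x = c0 * b" for l x
    using W_cocycle_wcoef_mult[OF W, of l x] assms(3,4) by (simp add: h twisted_diff_def algebra_simps)
  have "wcoef a b (- b / (a - 1)) = 0" using assms(2) by (simp add: wcoef_def field_simps)
  then have "c0 * b = 0" using K[of "- b / (a - 1)" 0] by simp
  then have "wcoef a b l * poly2 g l x = 0" for l x using K by simp
  moreover have "(a, b) \<noteq> (1, 0)" using assms(2) by simp
  ultimately show "g = 0" using cpoly2_eq_0_if_wcoef_mult_eq_0 by blast
qed

lemma W_cocycle_degree_cases:
  assumes W: "W_cocycle a b al be alb beb g" and g: "g \<noteq> 0"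
    and a1: "a \<noteq> 1" and alb0: "alb \<noteq> 0" and bb: "be = beb - b"
  shows "(degree (eval2 g 0) = 0 \<and> al - alb = 1 - a)
       \<or> (degree (eval2 g 0) = 1 \<and> al - alb = 2 - a)
       \<or> (degree (eval2 g 0) = 2 \<and> al = 1 \<and> alb = a - 2)
       \<or> (degree (eval2 g 0) = 3 \<and> al = 5/3 \<and> a = 5/3 \<and> alb = -(2/3))"
proof -
  have "eval2 g 0 \<noteq> 0" using eval2_0_neq_0_if_W_cocycle[OF W _ g] a1 by simp
  then have "leading_form a al alb (degree (eval2 g 0)) p q = 0" for p q
    using leading_form_eq_0[OF W_residual_eq_0[OF W] a1] by blast
  moreover have "\<not> (degree (eval2 g 0) = 0 \<and> al = alb)"
    using W_cocycle_eq_0_if_const_H[OF W a1 _ bb] g by blast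
  ultimately show ?thesis using leading_form_degree_cases[OF _ alb0] by blast
qed

lemma W_cocycle_degree_cases_a1:
  assumes W: "W_cocycle 1 b al be alb beb g" and g: "g \<noteq> 0" and b0: "b \<noteq> 0" and alb0: "alb \<noteq> 0"
  shows "(degree (eval2 g 0) = 0 \<and> (al = alb \<or> al - alb = 1))
       \<or> (degree (eval2 g 0) = 1 \<and> al - alb = 2)
       \<or> (degree (eval2 g 0) = 2 \<and> al = 1 \<and> alb = -2)"
proof -
  have "eval2 g 0 \<noteq> 0" using eval2_0_neq_0_if_W_cocycle[OF W _ g] b0 by simp
  then have "leading_form 0 al alb (degree (eval2 g 0)) p q = 0" for p q
    using leading_form_eq_0_a1[OF W_residual_a1_eq_0[OF W b0]] by blast
  from leading_form_degree_cases[OF this alb0] show ?thesis by auto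
qed

lemma W_cocycle_degree_eq:
  assumes "W_cocycle a b al be alb beb g" and "g \<noteq> 0" and "a \<noteq> 1" and "alb \<noteq> 0" and "be = beb - b"
  shows "al - alb = of_nat (degree (eval2 g 0)) + 1 - a"
  using W_cocycle_degree_cases[OF assms] by (auto simp del: eq_divide_eq_numeral1)

section \<open>Classification\<close>

lemma W_cocycle_const: "al - alb = 1 - a \<Longrightarrow> be = beb - b \<Longrightarrow> W_cocycle a b al be alb beb (cc c)"
  unfolding W_cocycle_def by simp algebra

lemma W_cocycle_g2b:
  assumes "a \<noteq> 1" and "al - alb = 2 - a" and "be = beb - b"
  shows "W_cocycle a b al be alb beb (g2b a b alb beb)"
  unfolding W_cocycle_def
proof (intro allI)
  fix x l m
  define u where "u = 1 / (1 - a)"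
  have u: "u * (1 - a) = 1" using assms(1) by (simp add: u_def)
  have div: "y / (1 - a) = y * u" for y by (simp add: u_def)
  show "(x + alb*l + beb) * poly2 (g2b a b alb beb) m (x + l)
      - (x + m + al*l + be) * poly2 (g2b a b alb beb) m x
    = ((a - 1)*l - m + b) * poly2 (g2b a b alb beb) (l + m) x"
    unfolding g2b_def using u assms(2,3) by (simp add: div) algebra
qed

lemma W_cocycle_g2c:
  assumes "a \<noteq> 1" and "al = 1" "alb = a - 2" and "be = beb - b"
  shows "W_cocycle a b al be alb beb (g2c a b alb beb)"
  unfolding W_cocycle_def
proof (intro allI)
  fix x l m
  define u where "u = 1 / (1 - a)"
  have u: "u * (1 - a) = 1" using assms(1) by (simp add: u_def)
  have div: "y / (1 - a) = y * u" for y by (simp add: u_def)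
  show "(x + alb*l + beb) * poly2 (g2c a b alb beb) m (x + l)
      - (x + m + al*l + be) * poly2 (g2c a b alb beb) m x
    = ((a - 1)*l - m + b) * poly2 (g2c a b alb beb) (l + m) x"
    unfolding g2c_def using u assms(2-4) by (simp add: div) algebra
qed

lemma W_cocycle_g2d:
  assumes "a = 5/3" "al = 5/3" "alb = -(2/3)" and "be = beb - b"
  shows "W_cocycle a b al be alb beb (g2d b beb)"
  unfolding W_cocycle_def g2d_def assms by simp algebra

lemma W_cocycle_g3b:
  assumes "al - alb = 1" and "be = beb - b"
  shows "W_cocycle 1 b al be alb beb (g3b b)"
proof -
  have al: "al = alb + 1" using assms(1) by (simp add: algebra_simps)
  show ?thesis unfolding W_cocycle_def g3b_def al assms(2) by simp algebra
qed

lemma W_cocycle_g3c: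
  assumes "al - alb = 2" and "be = beb - b"
  shows "W_cocycle 1 b al be alb beb (g3c b alb beb)"
proof -
  have al: "al = alb + 2" using assms(1) by (simp add: algebra_simps)
  show ?thesis unfolding W_cocycle_def g3c_def al assms(2) by simp algebra
qed

lemma W_cocycle_g3d:
  assumes "al = 1" "alb = -2" and "be = beb - b"
  shows "W_cocycle 1 b al be alb beb (g3d b beb)"
  unfolding W_cocycle_def g3d_def assms by simp algebra

lemma classifying_polys_neq_0:
  "g2b a b alb beb \<noteq> 0" "g2c a b alb beb \<noteq> 0" "g2d b beb \<noteq> 0"
  "b \<noteq> 0 \<Longrightarrow> g3b b \<noteq> 0" "b \<noteq> 0 \<Longrightarrow> g3c b alb beb \<noteq> 0" "b \<noteq> 0 \<Longrightarrow> g3d b beb \<noteq> 0"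
proof -
  have nz: "g \<noteq> 0" if "degree (eval2 g 0) \<noteq> 0" for g
    using that by auto
  show "g2b a b alb beb \<noteq> 0" by (rule nz) (simp add: g2b_def)
  show "g2c a b alb beb \<noteq> 0" by (rule nz) (simp add: g2c_def power2_eq_square)
  show "g2d b beb \<noteq> 0" by (rule nz) (simp add: g2d_def power2_eq_square power3_eq_cube)
  have "eval2 (g3b b) 0 = [:- b:]" by (simp add: g3b_def)
  then show "b \<noteq> 0 \<Longrightarrow> g3b b \<noteq> 0" by auto
  show "b \<noteq> 0 \<Longrightarrow> g3c b alb beb \<noteq> 0" by (rule nz) (simp add: g3c_def power2_eq_square)
  show "b \<noteq> 0 \<Longrightarrow> g3d b beb \<noteq> 0" by (rule nz) (simp add: g3d_def power2_eq_square power3_eq_cube)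
qed

text \<open>A suitable combination of two cocycles has an \<open>H\<close> of lower degree, hence vanishes.\<close>

lemma W_cocycle_multiple:
  assumes ab: "(a, b) \<noteq> (1, 0)"
    and W: "W_cocycle a b al be alb beb g" "g \<noteq> 0"
    and Ws: "W_cocycle a b al be alb beb gs" "gs \<noteq> 0"
    and same_degree: "\<And>g1 g2. W_cocycle a b al be alb beb g1 \<Longrightarrow> g1 \<noteq> 0 \<Longrightarrow>
                        W_cocycle a b al be alb beb g2 \<Longrightarrow> g2 \<noteq> 0 \<Longrightarrow>
                        degree (eval2 g1 0) = degree (eval2 g2 0)"
  shows "\<exists>c. c \<noteq> 0 \<and> g = cc c * gs"
proof -
  define h where "h = eval2 g 0"
  define hs where "hs = eval2 gs 0"
  have "h \<noteq> 0" "hs \<noteq> 0"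
    unfolding h_def hs_def using eval2_0_neq_0_if_W_cocycle ab W Ws by blast+
  define c where "c = lead_coeff h / lead_coeff hs"
  have "c \<noteq> 0" using \<open>h \<noteq> 0\<close> \<open>hs \<noteq> 0\<close> by (simp add: c_def)
  define g' where "g' = g - cc c * gs"
  have W': "W_cocycle a b al be alb beb g'"
    unfolding g'_def using W(1) W_cocycle_scale[OF Ws(1)] by (rule W_cocycle_diff)
  have "g' = 0"
  proof (rule ccontr)
    assume "g' \<noteq> 0"
    then have "eval2 g' 0 \<noteq> 0" using eval2_0_neq_0_if_W_cocycle[OF W' ab] by blast
    have "degree (eval2 g' 0) = degree h" "degree hs = degree h"
      unfolding h_def hs_def using same_degree W Ws W' \<open>g' \<noteq> 0\<close> by blast+
    then have "lead_coeff (eval2 g' 0) = lead_coeff h - c * lead_coeff hs"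
      by (simp add: g'_def h_def hs_def)
    also have "\<dots> = 0" using \<open>hs \<noteq> 0\<close> by (simp add: c_def)
    finally show False using \<open>eval2 g' 0 \<noteq> 0\<close> by simp
  qed
  then show ?thesis using \<open>c \<noteq> 0\<close> unfolding g'_def by auto
qed

lemma W_cocycle_iff_a_ne_1:
  assumes a1: "a \<noteq> 1" and alb0: "alb \<noteq> 0" and res: "be - beb + b = 0" and g: "g \<noteq> 0"
  shows "W_cocycle a b al be alb beb g \<longleftrightarrow>
           (al - alb = 1 - a \<and> (\<exists>c. c \<noteq> 0 \<and> g = cc c))
         \<or> (al - alb = 2 - a \<and> (\<exists>c. c \<noteq> 0 \<and> g = cc c * g2b a b alb beb))
         \<or> (al = 1 \<and> alb = a - 2 \<and> (\<exists>c. c \<noteq> 0 \<and> g = cc c * g2c a b alb beb))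
         \<or> (al = 5/3 \<and> a = 5/3 \<and> alb = -(2/3) \<and> (\<exists>c. c \<noteq> 0 \<and> g = cc c * g2d b beb))"
    (is "?L \<longleftrightarrow> ?R")
proof -
  have bb: "be = beb - b" using res by (simp add: algebra_simps)
  have ab: "(a, b) \<noteq> (1, 0)" using a1 by simp
  show ?thesis
  proof
    assume ?R
    then show ?L
      by (elim disjE conjE exE)
        (simp_all add: W_cocycle_scale W_cocycle_const[OF _ bb] W_cocycle_g2b[OF a1 _ bb]
          W_cocycle_g2c[OF a1 _ _ bb] W_cocycle_g2d[OF _ _ _ bb])
  next
    assume W: ?L
    have "degree (eval2 g1 0) = degree (eval2 g2 0)"
      if "W_cocycle a b al be alb beb g1" "g1 \<noteq> 0" "W_cocycle a b al be alb beb g2" "g2 \<noteq> 0" for g1 g2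
      using W_cocycle_degree_eq[OF that(1,2) a1 alb0 bb] W_cocycle_degree_eq[OF that(3,4) a1 alb0 bb]
      by simp
    note multiple = W_cocycle_multiple[OF ab W g _ _ this]
    from W_cocycle_degree_cases[OF W g a1 alb0 bb] show ?R
    proof (elim disjE conjE)
      assume "al - alb = 1 - a"
      then show ?R using multiple[OF W_cocycle_const[OF _ bb, where c = 1]] by auto
    next
      assume "al - alb = 2 - a"
      then show ?R using multiple[OF W_cocycle_g2b[OF a1 _ bb] classifying_polys_neq_0(1)] by blast
    next
      assume "al = 1" "alb = a - 2"
      then show ?R using multiple[OF W_cocycle_g2c[OF a1 _ _ bb] classifying_polys_neq_0(2)] by blast
    next
      assume "al = 5/3" "a = 5/3" "alb = -(2/3)"
      then show ?R using multiple[OF W_cocycle_g2d[OF _ _ _ bb] classifying_polys_neq_0(3)] by blast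
    qed
  qed
qed

lemma W_cocycle_iff_a_eq_1:
  assumes a1: "a = 1" and ab: "(a, b) \<noteq> (1, 0)" and alb0: "alb \<noteq> 0" and res: "be - beb + b = 0"
    and g: "g \<noteq> 0"
  shows "W_cocycle a b al be alb beb g \<longleftrightarrow>
           (al = alb \<and> (\<exists>c. c \<noteq> 0 \<and> g = cc c))
         \<or> (al - alb = 1 \<and> (\<exists>c. c \<noteq> 0 \<and> g = cc c * g3b b))
         \<or> (al - alb = 2 \<and> (\<exists>c. c \<noteq> 0 \<and> g = cc c * g3c b alb beb))
         \<or> (al = 1 \<and> alb = -2 \<and> (\<exists>c. c \<noteq> 0 \<and> g = cc c * g3d b beb))"
    (is "?L \<longleftrightarrow> ?R")
proof -
  have bb: "be = beb - b" using res by (simp add: algebra_simps)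
  have b0: "b \<noteq> 0" using a1 ab by simp
  show ?thesis
  proof
    assume ?R
    then show ?L
      unfolding a1
      by (elim disjE conjE exE)
        (simp_all add: W_cocycle_scale W_cocycle_const[OF _ bb] W_cocycle_g3b[OF _ bb]
          W_cocycle_g3c[OF _ bb] W_cocycle_g3d[OF _ _ bb])
  next
    assume ?L
    then have W: "W_cocycle 1 b al be alb beb g" unfolding a1 .
    have "degree (eval2 g1 0) = degree (eval2 g2 0)"
      if "W_cocycle 1 b al be alb beb g1" "g1 \<noteq> 0" "W_cocycle 1 b al be alb beb g2" "g2 \<noteq> 0" for g1 g2
      using W_cocycle_degree_cases_a1[OF that(1,2) b0 alb0] W_cocycle_degree_cases_a1[OF that(3,4) b0 alb0]
      by auto
    note multiple = W_cocycle_multiple[OF _ W g _ _ this]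
    from W_cocycle_degree_cases_a1[OF W g b0 alb0] show ?R
    proof (elim disjE conjE)
      assume "al = alb"
      then show ?R using multiple[OF _ W_cocycle_const[OF _ bb, where c = 1]] b0 by auto
    next
      assume "al - alb = 1"
      then show ?R using multiple[OF _ W_cocycle_g3b[OF _ bb] classifying_polys_neq_0(4)[OF b0]] b0 by blast
    next
      assume "al - alb = 2"
      then show ?R using multiple[OF _ W_cocycle_g3c[OF _ bb] classifying_polys_neq_0(5)[OF b0]] b0 by blast
    next
      assume "al = 1" "alb = -2"
      then show ?R using multiple[OF _ W_cocycle_g3d[OF _ _ bb] classifying_polys_neq_0(6)[OF b0]] b0 by blast
    qed
  qed
qed

theorem theorem3p9:
  fixes a b al be alb beb :: complex
  assumes ab: "(a, b) \<noteq> (1, 0)"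
    and al0: "al \<noteq> 0" and alb0: "alb \<noteq> 0" and bene: "be \<noteq> beb"
  shows
    "(be - beb + b \<noteq> 0 \<longrightarrow>
        (\<forall>f g. is_ext_module a b al be alb beb f g \<longrightarrow> ext_trivial al be alb beb f g))
     \<and>
     (be - beb + b = 0 \<longrightarrow>
        (\<forall>f g. is_ext_module a b al be alb beb f g \<longrightarrow>
            (\<exists>g'. is_ext_module a b al be alb beb 0 g' \<and> ext_equiv al be alb beb f g 0 g'))
      \<and> (\<forall>g. is_ext_module a b al be alb beb 0 g \<longrightarrow>
            (\<not> ext_trivial al be alb beb 0 g \<longleftrightarrow> g \<noteq> 0))
      \<and> (a \<noteq> 1 \<longrightarrow> (\<forall>g. g \<noteq> 0 \<longrightarrow>
            (is_ext_module a b al be alb beb 0 g \<longleftrightarrow>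
               (al - alb = 1 - a \<and> (\<exists>c. c \<noteq> 0 \<and> g = cc c))
             \<or> (al - alb = 2 - a \<and> (\<exists>c. c \<noteq> 0 \<and> g = cc c * g2b a b alb beb))
             \<or> (al = 1 \<and> alb = a - 2 \<and> (\<exists>c. c \<noteq> 0 \<and> g = cc c * g2c a b alb beb))
             \<or> (al = 5/3 \<and> a = 5/3 \<and> alb = -(2/3) \<and> (\<exists>c. c \<noteq> 0 \<and> g = cc c * g2d b beb)))))
      \<and> (a = 1 \<longrightarrow> (\<forall>g. g \<noteq> 0 \<longrightarrow>
            (is_ext_module a b al be alb beb 0 g \<longleftrightarrow>
               (al = alb \<and> (\<exists>c. c \<noteq> 0 \<and> g = cc c))
             \<or> (al - alb = 1 \<and> (\<exists>c. c \<noteq> 0 \<and> g = cc c * g3b b))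
             \<or> (al - alb = 2 \<and> (\<exists>c. c \<noteq> 0 \<and> g = cc c * g3c b alb beb))
             \<or> (al = 1 \<and> alb = -2 \<and> (\<exists>c. c \<noteq> 0 \<and> g = cc c * g3d b beb))))))"
proof (intro conjI impI allI)
  fix f g :: cpoly2
  assume "be - beb + b \<noteq> 0" and "is_ext_module a b al be alb beb f g"
  then show "ext_trivial al be alb beb f g" using ext_trivial_if_nonresonant bene by blast
next
  fix f g :: cpoly2
  assume "is_ext_module a b al be alb beb f g"
  then show "\<exists>g'. is_ext_module a b al be alb beb 0 g' \<and> ext_equiv al be alb beb f g 0 g'"
    using ext_equiv_drop_f bene by (auto simp: is_ext_module_iff_cocycles L_cocycle_0)
next
  fix g :: cpoly2
  show "\<not> ext_trivial al be alb beb 0 g \<longleftrightarrow> g \<noteq> 0" by (simp add: ext_trivial_0_iff)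
qed (use W_cocycle_iff_a_ne_1[OF _ alb0] W_cocycle_iff_a_eq_1[OF _ ab alb0] in
       \<open>simp_all add: is_ext_module_0_iff\<close>)

end
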